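(* Let $\Omega\subset\mathbb R^d$ be a bounded Borel set, $f:\Omega\to[0,\infty)$ with $\int_\Omega f=1$, $p\ge1$, $x_1,x_2\in\Omega$, $h_1,h_2:[0,1]\to[0,\infty)$ continuous and non-decreasing, and $\kappa\in\mathbb N$, $\kappa\ge1$. Assume $G$ is strictly Lipschitz with constant $\kappa$, i.e. $|G(s)-G(t)|<\kappa|s-t|$ for all $s\ne t$. Let $t_1,\dots,t_\kappa\in\mathbb R$ be arbitrary and define for $n\ge\kappa$ $$t_{n+1}=\frac1\kappa\sum_{m=n-\kappa+1}^nG(t_m),$$ and for $n>\kappa$ let $\psi_n(x)=0$ if $\tau(x)<t_n$, $\psi_n(x)=1$ otherwise. Then $t_n\to\bar t$ and $\psi_n\to\bar\psi$ uniformly on every compact subset of $\Omega\setminus\{\tau=\bar t\}$.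
   Context: $\tau(x)=|x-x_1|^p-|x-x_2|^p$, $m(t)=\int_{\{x\in\Omega:\tau(x)<t\}}f\,dx$, $G(t)=h_2(1-m(t))-h_1(m(t))$. There is a unique $\bar t$ with $G(\bar t)=\bar t$, and $\bar\psi(x)=0$ if $\tau(x)<\bar t$, $\bar\psi(x)=1$ if $\tau(x)>\bar t$ (the unique equilibrium). *)

theory Defs
  imports "HOL-Analysis.Analysis"
begin

definition tau :: "real \<Rightarrow> 'a::euclidean_space \<Rightarrow> 'a \<Rightarrow> 'a \<Rightarrow> real" where
  "tau p x1 x2 x = norm (x - x1) powr p - norm (x - x2) powr p"

definition mfun :: "'a::euclidean_space set \<Rightarrow> ('a \<Rightarrow> real) \<Rightarrow> real \<Rightarrow> 'a \<Rightarrow> 'a \<Rightarrow> real \<Rightarrow> real" where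
  "mfun \<Omega> f p x1 x2 t = (LINT x:{x \<in> \<Omega>. tau p x1 x2 x < t}|lborel. f x)"

definition Gfun :: "'a::euclidean_space set \<Rightarrow> ('a \<Rightarrow> real) \<Rightarrow> real \<Rightarrow> 'a \<Rightarrow> 'a
      \<Rightarrow> (real \<Rightarrow> real) \<Rightarrow> (real \<Rightarrow> real) \<Rightarrow> real \<Rightarrow> real" where
  "Gfun \<Omega> f p x1 x2 h1 h2 t = h2 (1 - mfun \<Omega> f p x1 x2 t) - h1 (mfun \<Omega> f p x1 x2 t)"

definition tbar :: "(real \<Rightarrow> real) \<Rightarrow> real" where
  "tbar G = (THE t. G t = t)"

text \<open>equilibrium: 0 where tau < tbar, 1 where tau > tbar (value on the level set is irrelevant)\<close>
definition psibar :: "(real \<Rightarrow> real) \<Rightarrow> ('a \<Rightarrow> real) \<Rightarrow> 'a \<Rightarrow> real" where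
  "psibar G tauf x = (if tauf x < tbar G then 0 else 1)"

end

theory Submission
  imports Defs
begin

text \<open>
Since \<open>m\<close> is non-decreasing, \<open>G\<close> is non-increasing and has exactly one fixed point \<open>tbar\<close>.
Let \<open>Q n\<close> be the partial sums of \<open>(tbar - G (t m)) / \<kappa>\<close>. The recursion then reads
\<open>t N - tbar = Q (N - \<kappa>) - Q N\<close> and \<open>Q (N + 1) = Q N + \<Phi> (Q (N - \<kappa>) - Q N)\<close> with
\<open>\<Phi> d = (tbar - G (tbar + d)) / \<kappa>\<close>, and the strict Lipschitz bound puts \<open>\<Phi> d\<close> between \<open>0\<close> and
\<open>d\<close>, never at \<open>d\<close>. So each new value of \<open>Q\<close> lies between two of the last \<open>\<kappa> + 1\<close> values, and
the range of these never grows. By compactness \<open>\<Phi> d\<close> stays a fixed distance away from \<open>d\<close> for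
\<open>\<epsilon> \<le> \<bar>d\<bar> \<le> D\<close>; hence a new value near either end of the range can only come from old values near
that end, and while the range has width at least \<open>\<epsilon>\<close> it loses a fixed amount every \<open>\<kappa> + 1\<close>
steps. The range shrinks to a point, so \<open>t n \<rightarrow> tbar\<close>, and on a compact set on which \<open>\<tau>\<close>
stays away from \<open>tbar\<close> the thresholded functions equal the equilibrium once \<open>t n\<close> is close
enough to \<open>tbar\<close>.
\<close>

locale lagged_recursion =
  fixes Q :: "nat \<Rightarrow> real" and \<Phi> :: "real \<Rightarrow> real" and k :: nat
  assumes continuous_\<Phi>: "continuous_on UNIV \<Phi>"
    and \<Phi>_pos: "d > 0 \<Longrightarrow> 0 \<le> \<Phi> d \<and> \<Phi> d < d"
    and \<Phi>_neg: "d < 0 \<Longrightarrow> d < \<Phi> d \<and> \<Phi> d \<le> 0"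
    and \<Phi>_zero: "\<Phi> 0 = 0"
    and Q_step: "k < N \<Longrightarrow> Q (Suc N) = Q N + \<Phi> (Q (N - k) - Q N)"
begin

text \<open>The statements about lower bounds follow from those about upper bounds applied to \<open>- Q\<close>.\<close>
lemma reflect: "lagged_recursion (\<lambda>n. - Q n) (\<lambda>d. - \<Phi> (- d)) k"
proof
  show "continuous_on UNIV (\<lambda>d. - \<Phi> (- d))"
    by (intro continuous_intros continuous_on_compose2[OF continuous_\<Phi>]) auto
  show "0 \<le> - \<Phi> (- d) \<and> - \<Phi> (- d) < d" if "d > 0" for d
    using \<Phi>_neg[of "- d"] that by auto
  show "d < - \<Phi> (- d) \<and> - \<Phi> (- d) \<le> 0" if "d < 0" for d
    using \<Phi>_pos[of "- d"] that by auto
qed (use \<Phi>_zero Q_step in auto)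

lemma step_between:
  assumes "k < N"
  shows "min (Q N) (Q (N - k)) \<le> Q (Suc N) \<and> Q (Suc N) \<le> max (Q N) (Q (N - k))"
  using Q_step[OF assms] \<Phi>_pos[of "Q (N - k) - Q N"] \<Phi>_neg[of "Q (N - k) - Q N"] \<Phi>_zero
  by (cases "Q (N - k) - Q N" "0 :: real" rule: linorder_cases) auto

lemma window_bounds_tail:
  assumes N: "k < N" and window: "Q ` {N - k..N} \<subseteq> {a..b}"
  shows "Q ` {N - k..} \<subseteq> {a..b}"
proof -
  have windows: "Q ` {M - k..M} \<subseteq> {a..b}" if "N \<le> M" for M
    using that
  proof (induction M rule: dec_induct)
    case (step M)
    have "Q M \<in> {a..b}" "Q (M - k) \<in> {a..b}" using step.IH by (auto simp: image_subset_iff)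
    then have "Q (Suc M) \<in> {a..b}" using step_between[of M] N step.hyps by auto
    moreover have "{Suc M - k..Suc M} \<subseteq> insert (Suc M) {M - k..M}" by auto
    ultimately show ?case using step.IH by blast
  qed (use window in simp)
  show ?thesis
  proof clarify
    fix j assume "N - k \<le> j"
    then show "Q j \<in> {a..b}"
      using windows[of "max N j"] window by (cases "j \<le> N") (auto simp: max_def image_subset_iff)
  qed
qed

definition gap_modulus :: "real \<Rightarrow> (real \<Rightarrow> real) \<Rightarrow> bool" where
  "gap_modulus D s \<longleftrightarrow> (\<forall>\<epsilon>>0. 0 < s \<epsilon> \<and> s \<epsilon> \<le> \<epsilon> / 2 \<and>
     (\<forall>d. \<bar>d\<bar> \<le> D \<and> \<bar>d - \<Phi> d\<bar> \<le> s \<epsilon> \<longrightarrow> \<bar>d\<bar> < \<epsilon> / 2))"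

lemma gap_modulus_reflect:
  assumes s: "gap_modulus D s"
  shows "lagged_recursion.gap_modulus (\<lambda>d. - \<Phi> (- d)) D s"
  unfolding lagged_recursion.gap_modulus_def[OF reflect]
proof (intro allI impI)
  fix \<epsilon> :: real assume \<epsilon>: "\<epsilon> > 0"
  have "\<bar>d\<bar> < \<epsilon> / 2" if "\<bar>d\<bar> \<le> D \<and> \<bar>d - - \<Phi> (- d)\<bar> \<le> s \<epsilon>" for d
  proof -
    have "\<bar>- d\<bar> \<le> D \<and> \<bar>- d - \<Phi> (- d)\<bar> \<le> s \<epsilon>" using that by linarith
    then have "\<bar>- d\<bar> < \<epsilon> / 2" using s \<epsilon> unfolding gap_modulus_def by blast
    then show ?thesis by simp
  qed
  then show "0 < s \<epsilon> \<and> s \<epsilon> \<le> \<epsilon> / 2 \<and>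
      (\<forall>d. \<bar>d\<bar> \<le> D \<and> \<bar>d - - \<Phi> (- d)\<bar> \<le> s \<epsilon> \<longrightarrow> \<bar>d\<bar> < \<epsilon> / 2)"
    using s \<epsilon> unfolding gap_modulus_def by blast
qed

text \<open>On the compact set \<open>\<epsilon>/2 \<le> \<bar>d\<bar> \<le> D\<close> the continuous defect \<open>\<bar>d - \<Phi> d\<bar>\<close> is positive,
  so it has a positive minimum.\<close>
lemma small_defect_imp_small:
  assumes "\<epsilon> > 0"
  shows "\<exists>\<eta>>0. \<eta> \<le> \<epsilon> / 2 \<and> (\<forall>d. \<bar>d\<bar> \<le> D \<and> \<bar>d - \<Phi> d\<bar> \<le> \<eta> \<longrightarrow> \<bar>d\<bar> < \<epsilon> / 2)"
proof (cases "\<exists>d. \<epsilon> / 2 \<le> \<bar>d\<bar> \<and> \<bar>d\<bar> \<le> D")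
  case False
  then show ?thesis using assms by (intro exI[of _ "\<epsilon> / 2"]) force
next
  case True
  define S where "S = cball (0::real) D \<inter> {d. \<epsilon> / 2 \<le> \<bar>d\<bar>}"
  have "compact S" unfolding S_def
    by (intro compact_Int_closed compact_cball closed_Collect_le continuous_intros)
  moreover have "S \<noteq> {}" using True unfolding S_def by auto
  moreover have "continuous_on S (\<lambda>d. \<bar>d - \<Phi> d\<bar>)"
    using continuous_on_subset[OF continuous_\<Phi>, of S] by (intro continuous_intros) auto
  ultimately have "\<exists>d0\<in>S. \<forall>d\<in>S. \<bar>d0 - \<Phi> d0\<bar> \<le> \<bar>d - \<Phi> d\<bar>"
    by (rule continuous_attains_inf)
  then obtain d0 where d0: "d0 \<in> S" "\<And>d. d \<in> S \<Longrightarrow> \<bar>d0 - \<Phi> d0\<bar> \<le> \<bar>d - \<Phi> d\<bar>"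
    by blast
  have "d0 \<noteq> 0" using d0(1) assms unfolding S_def by auto
  then have \<mu>: "\<bar>d0 - \<Phi> d0\<bar> > 0" using \<Phi>_pos[of d0] \<Phi>_neg[of d0] by (cases "d0 > 0") auto
  show ?thesis
  proof (intro exI[of _ "min (\<epsilon> / 2) (\<bar>d0 - \<Phi> d0\<bar> / 2)"] conjI allI impI)
    fix d assume d: "\<bar>d\<bar> \<le> D \<and> \<bar>d - \<Phi> d\<bar> \<le> min (\<epsilon> / 2) (\<bar>d0 - \<Phi> d0\<bar> / 2)"
    then have "\<bar>d - \<Phi> d\<bar> \<le> \<bar>d0 - \<Phi> d0\<bar> / 2" by simp
    then have "\<not> \<bar>d0 - \<Phi> d0\<bar> \<le> \<bar>d - \<Phi> d\<bar>" using \<mu> by (smt (verit) field_sum_of_halves)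
    then have "d \<notin> S" using d0(2) by blast
    then show "\<bar>d\<bar> < \<epsilon> / 2" using d unfolding S_def by auto
  qed (use assms \<mu> in auto)
qed

lemma gap_modulus_exists: "\<exists>s. gap_modulus D s"
  using small_defect_imp_small[of _ D] unfolding gap_modulus_def by metis

lemma gap_modulus_iterate:
  assumes s: "gap_modulus D s" and "\<epsilon> > 0"
  shows gap_modulus_iterate_pos: "(s ^^ i) \<epsilon> > 0"
    and gap_modulus_iterate_antimono: "i \<le> j \<Longrightarrow> (s ^^ j) \<epsilon> \<le> (s ^^ i) \<epsilon>"
proof -
  show pos: "(s ^^ i) \<epsilon> > 0" for i
    by (induction i) (use s \<open>\<epsilon> > 0\<close> in \<open>auto simp: gap_modulus_def\<close>)
  have "(s ^^ Suc n) \<epsilon> \<le> (s ^^ n) \<epsilon>" for n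
    using s pos[of n] unfolding gap_modulus_def by force
  then show "i \<le> j \<Longrightarrow> (s ^^ j) \<epsilon> \<le> (s ^^ i) \<epsilon>"
    by (rule lift_Suc_antimono_le)
qed

text \<open>A value close to the upper bound \<open>b\<close> can only come from a value almost as close: either
  the step went down, or it went up by \<open>\<Phi>(d)\<close> with a defect \<open>d - \<Phi>(d)\<close> so small that \<open>d\<close> is small.\<close>
lemma near_top_backward:
  assumes s: "gap_modulus D s" and j: "k < j" and "Q (j - k) \<le> b"
    and D: "\<bar>Q (j - k) - Q j\<bar> \<le> D" and \<epsilon>: "\<epsilon> > 0" and near: "b - s \<epsilon> \<le> Q (Suc j)"
  shows "b - \<epsilon> \<le> Q j"
proof -
  define d where "d = Q (j - k) - Q j"
  have step: "Q (Suc j) = Q j + \<Phi> d" using Q_step[OF j] d_def by simp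
  have s\<epsilon>: "s \<epsilon> \<le> \<epsilon> / 2" "\<forall>d. \<bar>d\<bar> \<le> D \<and> \<bar>d - \<Phi> d\<bar> \<le> s \<epsilon> \<longrightarrow> \<bar>d\<bar> < \<epsilon> / 2"
    using s \<epsilon> unfolding gap_modulus_def by auto
  show ?thesis
  proof (cases "d > 0")
    case True
    have "\<bar>d - \<Phi> d\<bar> \<le> s \<epsilon>" using \<Phi>_pos[OF True] step d_def \<open>Q (j - k) \<le> b\<close> near by auto
    then have "\<bar>d\<bar> < \<epsilon> / 2" using s\<epsilon>(2) D d_def by auto
    then show ?thesis using \<Phi>_pos[OF True] step near s\<epsilon>(1) by auto
  next
    case False
    then have "\<Phi> d \<le> 0" using \<Phi>_neg[of d] \<Phi>_zero by (cases "d = 0") auto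
    then show ?thesis using step near s\<epsilon>(1) \<epsilon> by auto
  qed
qed

lemma near_top_backward_iterate:
  assumes s: "gap_modulus D s" and D: "\<And>j. k < j \<Longrightarrow> \<bar>Q (j - k) - Q j\<bar> \<le> D"
    and N: "k < N" and bound: "Q ` {N - k..} \<subseteq> {..b}" and \<epsilon>: "\<epsilon> > 0"
    and near: "b - (s ^^ i) \<epsilon> \<le> Q (N + i)"
  shows "b - \<epsilon> \<le> Q N"
  using N bound \<epsilon> near
proof (induction i arbitrary: N \<epsilon>)
  case (Suc i)
  have "s \<epsilon> > 0" using s Suc.prems(3) unfolding gap_modulus_def by auto
  moreover have "Q ` {Suc N - k..} \<subseteq> {..b}" using Suc.prems(2) by (auto simp: image_subset_iff)
  moreover have "b - (s ^^ i) (s \<epsilon>) \<le> Q (Suc N + i)"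
    using Suc.prems(4) by (simp add: funpow_Suc_right del: funpow.simps)
  ultimately have "b - s \<epsilon> \<le> Q (Suc N)" using Suc.IH Suc.prems(1) by simp
  moreover have "Q (N - k) \<le> b" using Suc.prems(2) by auto
  ultimately show ?case using near_top_backward[OF s _ _ D] Suc.prems by auto
qed simp

text \<open>New values near both ends of the range would force \<open>Q N\<close> near both ends.\<close>
lemma window_shrinks:
  assumes s: "gap_modulus D s" and D: "\<And>j. k < j \<Longrightarrow> \<bar>Q (j - k) - Q j\<bar> \<le> D"
    and N: "k < N" and window: "Q ` {N - k..N} \<subseteq> {a..b}"
    and l: "0 < l" "l \<le> b - a"
  defines "\<eta> \<equiv> (s ^^ Suc k) (l / 3)"
  shows "Q ` {Suc N..N + Suc k} \<subseteq> {a..b - \<eta>} \<or> Q ` {Suc N..N + Suc k} \<subseteq> {a + \<eta>..b}"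
proof (rule ccontr)
  assume "\<not> ?thesis"
  then obtain i1 i2 where i: "i1 \<in> {Suc N..N + Suc k}" "i2 \<in> {Suc N..N + Suc k}"
    and out: "Q i1 \<notin> {a..b - \<eta>}" "Q i2 \<notin> {a + \<eta>..b}"
    unfolding image_subset_iff by blast
  have tail: "Q ` {N - k..} \<subseteq> {a..b}" by (rule window_bounds_tail[OF N window])
  have \<eta>_le: "\<eta> \<le> (s ^^ (i - N)) (l / 3)" if "i \<in> {Suc N..N + Suc k}" for i
    unfolding \<eta>_def using that by (intro gap_modulus_iterate_antimono[OF s]) (use l in auto)
  have "Q i1 \<in> {a..b}" "Q i2 \<in> {a..b}" using tail i by (auto simp: image_subset_iff)
  then have near: "b - (s ^^ (i1 - N)) (l / 3) \<le> Q (N + (i1 - N))"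
    "Q (N + (i2 - N)) \<le> a + (s ^^ (i2 - N)) (l / 3)"
    using \<eta>_le[OF i(1)] \<eta>_le[OF i(2)] out i by auto
  have top: "b - l / 3 \<le> Q N"
    using near_top_backward_iterate[OF s D N _ _ near(1)] tail l by (auto simp: image_subset_iff)
  interpret neg: lagged_recursion "\<lambda>n. - Q n" "\<lambda>d. - \<Phi> (- d)" k by (rule reflect)
  have "- a - l / 3 \<le> - Q N"
  proof (rule neg.near_top_backward_iterate[OF gap_modulus_reflect[OF s] _ N])
    show "\<bar>- Q (j - k) - - Q j\<bar> \<le> D" if "k < j" for j using D[OF that] by simp
    show "(\<lambda>n. - Q n) ` {N - k..} \<subseteq> {..- a}" using tail by (auto simp: image_subset_iff)
    show "- a - (s ^^ (i2 - N)) (l / 3) \<le> - Q (N + (i2 - N))" using near(2) by simp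
  qed (use l in simp)
  then show False using top l by auto
qed

lemma window_width_decreases:
  assumes s: "gap_modulus D s" and D: "\<And>j. k < j \<Longrightarrow> \<bar>Q (j - k) - Q j\<bar> \<le> D"
    and window0: "Q ` {1..Suc k} \<subseteq> {a0..b0}" "b0 - a0 \<le> D" and l: "0 < l"
  defines "\<eta> \<equiv> (s ^^ Suc k) (l / 3) :: real"
  shows "\<exists>a b. Q ` {Suc k + i * Suc k - k..Suc k + i * Suc k} \<subseteq> {a..b} \<and>
    (b - a < l \<or> b - a \<le> D - i * \<eta>)"
proof (induction i)
  case 0 show ?case using window0 by auto
next
  case (Suc i)
  let ?N = "Suc k + i * Suc k"
  obtain a b where ab: "Q ` {?N - k..?N} \<subseteq> {a..b}" "b - a < l \<or> b - a \<le> D - i * \<eta>"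
    using Suc.IH by blast
  have N: "k < ?N" by simp
  have next_window: "{Suc k + Suc i * Suc k - k..Suc k + Suc i * Suc k} = {Suc ?N..?N + Suc k}"
    by auto
  show ?case
  proof (cases "b - a < l")
    case True
    have "{Suc ?N..?N + Suc k} \<subseteq> {?N - k..}" by auto
    then show ?thesis unfolding next_window using window_bounds_tail[OF N ab(1)] True by blast
  next
    case False
    then have le: "b - a \<le> D - i * \<eta>" "l \<le> b - a" using ab(2) by auto
    from window_shrinks[OF s D N ab(1) l le(2), folded \<eta>_def next_window]
    show ?thesis
    proof
      assume "Q ` {Suc k + Suc i * Suc k - k..Suc k + Suc i * Suc k} \<subseteq> {a..b - \<eta>}"
      then show ?thesis using le(1) by (intro exI[of _ a] exI[of _ "b - \<eta>"]) (simp add: algebra_simps)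
    next
      assume "Q ` {Suc k + Suc i * Suc k - k..Suc k + Suc i * Suc k} \<subseteq> {a + \<eta>..b}"
      then show ?thesis using le(1) by (intro exI[of _ "a + \<eta>"] exI[of _ b]) (simp add: algebra_simps)
    qed
  qed
qed

lemma lag_difference_tendsto_zero: "(\<lambda>N. Q (N - k) - Q N) \<longlonglongrightarrow> 0"
proof (rule LIMSEQ_I)
  fix l :: real assume l: "l > 0"
  define a0 where "a0 = Min (Q ` {1..Suc k})"
  define b0 where "b0 = Max (Q ` {1..Suc k})"
  have window0: "Q ` {1..Suc k} \<subseteq> {a0..b0}"
    unfolding a0_def b0_def by (auto intro!: Min_le Max_ge)
  have tail0: "Q ` {1..} \<subseteq> {a0..b0}" using window_bounds_tail[of "Suc k"] window0 by simp
  have D: "\<bar>Q (j - k) - Q j\<bar> \<le> b0 - a0" if "k < j" for j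
  proof -
    have "Q (j - k) \<in> {a0..b0}" "Q j \<in> {a0..b0}" using tail0 that by (auto simp: image_subset_iff)
    then show ?thesis by auto
  qed
  obtain s where s: "gap_modulus (b0 - a0) s" using gap_modulus_exists by blast
  define \<eta> where "\<eta> = (s ^^ Suc k) (l / 3)"
  have "\<eta> > 0" unfolding \<eta>_def by (rule gap_modulus_iterate_pos[OF s]) (use l in simp)
  then obtain i :: nat where i: "b0 - a0 < i * \<eta>" using reals_Archimedean3 by blast
  let ?N = "Suc k + i * Suc k"
  obtain a b where ab: "Q ` {?N - k..?N} \<subseteq> {a..b}" "b - a < l \<or> b - a \<le> b0 - a0 - i * \<eta>"
    using window_width_decreases[OF s D window0 order.refl l, of i] unfolding \<eta>_def by blast
  have "?N \<in> {?N - k..?N}" by simp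
  then have "a \<le> b" using ab(1) by force
  then have "b - a < l" using ab(2) i by linarith
  have tail: "Q ` {?N - k..} \<subseteq> {a..b}" by (rule window_bounds_tail[OF _ ab(1)]) simp
  have "\<bar>Q (N - k) - Q N\<bar> < l" if "?N \<le> N" for N
  proof -
    have "Q (N - k) \<in> {a..b}" "Q N \<in> {a..b}" using tail that by (auto simp: image_subset_iff)
    then show ?thesis using \<open>b - a < l\<close> by auto
  qed
  then show "\<exists>N0. \<forall>N\<ge>N0. norm (Q (N - k) - Q N - 0) < l" by auto
qed

end

lemma continuous_if_strictly_lipschitz:
  fixes G :: "real \<Rightarrow> real"
  assumes lip: "\<And>s r. s \<noteq> r \<Longrightarrow> \<bar>G s - G r\<bar> < L * \<bar>s - r\<bar>"
  shows "continuous_on UNIV G"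
proof (rule lipschitz_on_continuous_on, rule lipschitz_onI)
  have "\<bar>G 1 - G 0\<bar> < L" using lip[of 1 0] by simp
  then show "0 \<le> L" using abs_ge_zero[of "G 1 - G 0"] by linarith
  show "dist (G s) (G r) \<le> L * dist s r" for s r
    using lip[of s r] by (cases "s = r") (auto simp: dist_real_def)
qed

lemma continuous_antimono_unique_fixed_point:
  fixes G :: "real \<Rightarrow> real"
  assumes cont: "continuous_on UNIV G" and anti: "antimono G"
  shows "\<exists>!c. G c = c"
proof (rule ex_ex1I)
  let ?a = "min 0 (G 0)" and ?b = "max 0 (G 0)"
  have "G ?b - ?b \<le> 0" "0 \<le> G ?a - ?a"
    using antimonoD[OF anti, of 0 "G 0"] antimonoD[OF anti, of "G 0" 0] by (auto simp: min_def max_def)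
  moreover have "continuous_on {?a..?b} (\<lambda>s. G s - s)"
    using continuous_on_subset[OF cont] by (intro continuous_intros) auto
  moreover have "?a \<le> ?b" by simp
  ultimately have "\<exists>c\<ge>?a. c \<le> ?b \<and> G c - c = 0" by (intro IVT2') auto
  then show "\<exists>c. G c = c" by auto
next
  show "c = c'" if "G c = c" "G c' = c'" for c c'
    using antimonoD[OF anti, of c c'] antimonoD[OF anti, of c' c] that by linarith
qed

lemma averaged_iteration_tendsto_fixed_point:
  fixes G :: "real \<Rightarrow> real" and t :: "nat \<Rightarrow> real" and \<kappa> :: nat
  assumes anti: "antimono G" and fixed: "G c = c" and \<kappa>: "\<kappa> \<ge> 1"
    and lip: "\<And>s r. s \<noteq> r \<Longrightarrow> \<bar>G s - G r\<bar> < real \<kappa> * \<bar>s - r\<bar>"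
    and t_rec: "\<And>n. n \<ge> \<kappa> \<Longrightarrow> t (n + 1) = (1 / real \<kappa>) * (\<Sum>m = n - \<kappa> + 1..n. G (t m))"
  shows "t \<longlonglongrightarrow> c"
proof -
  define Q where "Q n = (\<Sum>m<n. (c - G (t m)) / real \<kappa>)" for n
  define \<Phi> where "\<Phi> d = (c - G (c + d)) / real \<kappa>" for d
  have \<kappa>_pos: "real \<kappa> > 0" using \<kappa> by simp
  have lag: "t N - c = Q (N - \<kappa>) - Q N" if N: "\<kappa> < N" for N
  proof -
    obtain n where n: "N = Suc n" "\<kappa> \<le> n" using N by (cases N) auto
    have window: "{n - \<kappa> + 1..n} = {Suc n - \<kappa>..<Suc n}" using n(2) by auto
    have "Q (Suc n) - Q (Suc n - \<kappa>) = (\<Sum>m = Suc n - \<kappa>..<Suc n. (c - G (t m)) / real \<kappa>)"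
      unfolding Q_def lessThan_atLeast0 by (rule sum_diff_nat_ivl) auto
    also have "\<dots> = (real \<kappa> * c - (\<Sum>m = Suc n - \<kappa>..<Suc n. G (t m))) / real \<kappa>"
      using n(2) by (simp add: sum_divide_distrib[symmetric] sum_subtractf)
    also have "\<dots> = c - t (Suc n)" using t_rec[OF n(2)] window \<kappa>_pos by (simp add: field_simps)
    finally show ?thesis using n(1) by simp
  qed
  interpret lagged_recursion Q \<Phi> \<kappa>
  proof
    have "continuous_on UNIV (\<lambda>d. G (c + d))"
      by (rule continuous_on_compose2[OF continuous_if_strictly_lipschitz[OF lip]])
         (auto intro: continuous_intros)
    then show "continuous_on UNIV \<Phi>" unfolding \<Phi>_def
      using \<kappa>_pos by (intro continuous_intros) auto
    show "0 \<le> \<Phi> d \<and> \<Phi> d < d" if "d > 0" for d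
      using antimonoD[OF anti, of c "c + d"] lip[of "c + d" c] that fixed \<kappa>_pos
      unfolding \<Phi>_def by (auto simp: field_simps)
    show "d < \<Phi> d \<and> \<Phi> d \<le> 0" if "d < 0" for d
      using antimonoD[OF anti, of "c + d" c] lip[of "c + d" c] that fixed \<kappa>_pos
      unfolding \<Phi>_def by (auto simp: field_simps)
    show "\<Phi> 0 = 0" unfolding \<Phi>_def using fixed by simp
    show "Q (Suc N) = Q N + \<Phi> (Q (N - \<kappa>) - Q N)" if "\<kappa> < N" for N
    proof -
      have "c + (Q (N - \<kappa>) - Q N) = t N" using lag[OF that] by simp
      then show ?thesis by (simp only: \<Phi>_def) (simp add: Q_def)
    qed
  qed
  have "(\<lambda>N. t N - c) \<longlonglongrightarrow> 0"
    by (rule Lim_transform_eventually[OF lag_difference_tendsto_zero])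
       (use lag in \<open>auto intro: eventually_sequentiallyI[of "Suc \<kappa>"]\<close>)
  then show ?thesis by (rule LIM_zero_iff[THEN iffD1])
qed

lemma threshold_uniform_limit:
  fixes \<tau> :: "'a::metric_space \<Rightarrow> real" and t :: "nat \<Rightarrow> real"
  assumes K: "compact K" and cont: "continuous_on K \<tau>" and avoid: "\<And>x. x \<in> K \<Longrightarrow> \<tau> x \<noteq> c"
    and t: "t \<longlonglongrightarrow> c"
  shows "uniform_limit K (\<lambda>n x. if \<tau> x < t n then 0 else 1 :: real)
    (\<lambda>x. if \<tau> x < c then 0 else 1) sequentially"
proof -
  have "closed (\<tau> ` K)" using compact_continuous_image[OF cont K] by (rule compact_imp_closed)
  then obtain \<delta> where \<delta>: "\<delta> > 0" "\<And>x. x \<in> K \<Longrightarrow> \<delta> \<le> dist c (\<tau> x)"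
    using separate_point_closed[of "\<tau> ` K" c] avoid by auto
  have "\<forall>\<^sub>F n in sequentially. dist (t n) c < \<delta>" using t \<delta>(1) by (rule tendstoD)
  then have "\<forall>\<^sub>F n in sequentially. \<forall>x\<in>K. (\<tau> x < t n) = (\<tau> x < c)"
    by eventually_elim (use \<delta>(2) in \<open>force simp: dist_real_def\<close>)
  then show ?thesis unfolding uniform_limit_iff
    by (auto elim: eventually_mono)
qed

lemma tau_continuous: "p > 0 \<Longrightarrow> continuous_on UNIV (tau p x1 x2)"
  unfolding tau_def by (intro continuous_intros continuous_on_powr') auto

lemma mfun_range_mono:
  fixes \<Omega> :: "'a::euclidean_space set" and f :: "'a \<Rightarrow> real"
  assumes \<Omega>: "\<Omega> \<in> sets borel" and f_nonneg: "\<forall>x\<in>\<Omega>. f x \<ge> 0"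
    and f_int: "set_integrable lborel \<Omega> f" and f_one: "(LINT x:\<Omega>|lborel. f x) = 1"
    and p: "p > 0"
  shows mfun_nonneg: "0 \<le> mfun \<Omega> f p x1 x2 s"
    and mfun_le_one: "mfun \<Omega> f p x1 x2 s \<le> 1"
    and mfun_mono: "mono (mfun \<Omega> f p x1 x2)"
proof -
  define A where "A t = {x \<in> \<Omega>. tau p x1 x2 x < t}" for t
  have "A t = \<Omega> \<inter> (tau p x1 x2 -` {..<t} \<inter> space borel)" for t unfolding A_def by auto
  moreover have "tau p x1 x2 \<in> borel_measurable borel"
    by (rule borel_measurable_continuous_onI[OF tau_continuous[OF p]])
  ultimately have A_sets: "A t \<in> sets lborel" for t
    using \<Omega> by (simp add: sets.Int measurable_sets)
  have A_int: "set_integrable lborel (A t) f" for t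
    by (rule set_integrable_subset[OF f_int A_sets]) (auto simp: A_def)
  have m_A: "mfun \<Omega> f p x1 x2 t = (LINT x:A t|lborel. f x)" for t
    unfolding mfun_def A_def by simp
  have integral_subset_mono: "(LINT x:B|lborel. f x) \<le> (LINT x:C|lborel. f x)"
    if "set_integrable lborel B f" "set_integrable lborel C f" "B \<subseteq> C" "C \<subseteq> \<Omega>" for B C
    using that unfolding set_lebesgue_integral_def set_integrable_def
    by (intro integral_mono) (auto simp: indicator_def f_nonneg subsetD)
  show "0 \<le> mfun \<Omega> f p x1 x2 s" unfolding m_A set_lebesgue_integral_def
    by (intro integral_nonneg_AE AE_I2) (auto simp: indicator_def A_def f_nonneg)
  show "mfun \<Omega> f p x1 x2 s \<le> 1" unfolding m_A f_one[symmetric]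
    by (rule integral_subset_mono[OF A_int f_int]) (auto simp: A_def)
  show "mono (mfun \<Omega> f p x1 x2)"
    by (rule monoI, unfold m_A, rule integral_subset_mono[OF A_int A_int]) (auto simp: A_def)
qed

lemma Gfun_antimono:
  fixes \<Omega> :: "'a::euclidean_space set" and f :: "'a \<Rightarrow> real"
  assumes \<Omega>: "\<Omega> \<in> sets borel" and f_nonneg: "\<forall>x\<in>\<Omega>. f x \<ge> 0"
    and f_int: "set_integrable lborel \<Omega> f" and f_one: "(LINT x:\<Omega>|lborel. f x) = 1"
    and p: "p > 0" and h1: "mono_on {0..1} h1" and h2: "mono_on {0..1} h2"
  shows "antimono (Gfun \<Omega> f p x1 x2 h1 h2)"
proof
  fix s r :: real assume "s \<le> r"
  let ?m = "mfun \<Omega> f p x1 x2"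
  note m = mfun_range_mono[OF assms(1-5)]
  have "?m s \<le> ?m r" using monoD[OF m(3) \<open>s \<le> r\<close>] .
  moreover have "?m s \<in> {0..1}" "?m r \<in> {0..1}" using m(1,2) by auto
  ultimately have "h1 (?m s) \<le> h1 (?m r)" "h2 (1 - ?m r) \<le> h2 (1 - ?m s)"
    by (auto intro: mono_onD[OF h1] mono_onD[OF h2])
  then show "Gfun \<Omega> f p x1 x2 h1 h2 r \<le> Gfun \<Omega> f p x1 x2 h1 h2 s"
    unfolding Gfun_def by linarith
qed

theorem theorem5p14:
  fixes \<Omega> :: "'a::euclidean_space set" and f :: "'a \<Rightarrow> real" and p :: real
    and x1 x2 :: 'a and h1 h2 :: "real \<Rightarrow> real" and \<kappa> :: nat and t :: "nat \<Rightarrow> real"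
  defines "G \<equiv> Gfun \<Omega> f p x1 x2 h1 h2"
  assumes \<Omega>_borel: "\<Omega> \<in> sets borel" and \<Omega>_bdd: "bounded \<Omega>"
    and f_nonneg: "\<forall>x\<in>\<Omega>. f x \<ge> 0"
    and f_int: "set_integrable lborel \<Omega> f"
    and f_one: "(LINT x:\<Omega>|lborel. f x) = 1"
    and p: "p \<ge> 1"
    and x1: "x1 \<in> \<Omega>" and x2: "x2 \<in> \<Omega>"
    and h1_cont: "continuous_on {0..1} h1" and h2_cont: "continuous_on {0..1} h2"
    and h1_mono: "mono_on {0..1} h1" and h2_mono: "mono_on {0..1} h2"
    and h1_nonneg: "\<forall>s\<in>{0..1}. h1 s \<ge> 0" and h2_nonneg: "\<forall>s\<in>{0..1}. h2 s \<ge> 0"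
    and \<kappa>: "\<kappa> \<ge> 1"
    and G_lip: "\<forall>s r. s \<noteq> r \<longrightarrow> \<bar>G s - G r\<bar> < real \<kappa> * \<bar>s - r\<bar>"
    and t_rec: "\<forall>n\<ge>\<kappa>. t (n + 1) = (1 / real \<kappa>) * (\<Sum>m = n - \<kappa> + 1..n. G (t m))"
  shows "t \<longlonglongrightarrow> tbar G \<and>
    (\<forall>K. compact K \<and> K \<subseteq> \<Omega> - {x. tau p x1 x2 x = tbar G} \<longrightarrow>
      uniform_limit K (\<lambda>n x. if tau p x1 x2 x < t n then 0 else 1)
        (psibar G (tau p x1 x2)) sequentially)"
proof -
  have p_pos: "p > 0" using p by simp
  have anti: "antimono G"
    unfolding G_def using Gfun_antimono[OF \<Omega>_borel f_nonneg f_int f_one p_pos h1_mono h2_mono] .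
  have "continuous_on UNIV G" using continuous_if_strictly_lipschitz G_lip by blast
  then have fixed: "G (tbar G) = tbar G"
    unfolding tbar_def by (rule theI'[OF continuous_antimono_unique_fixed_point[OF _ anti]])
  have conv: "t \<longlonglongrightarrow> tbar G"
    using averaged_iteration_tendsto_fixed_point[OF anti fixed \<kappa>] G_lip t_rec by blast
  have "uniform_limit K (\<lambda>n x. if tau p x1 x2 x < t n then 0 else 1)
      (psibar G (tau p x1 x2)) sequentially"
    if "compact K" "K \<subseteq> \<Omega> - {x. tau p x1 x2 x = tbar G}" for K
    unfolding psibar_def[abs_def] using that
    by (intro threshold_uniform_limit[OF _ _ _ conv] continuous_on_subset[OF tau_continuous[OF p_pos]]) auto
  with conv show ?thesis by blast
qed

end
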